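(* Let $\mathrm b$ be a profile, $C\ge 0$, $r>0$, and $n$ large enough that $\rho_n^\pm:=\tfrac12\pm\tfrac{r}{n^{1/3}}\in[1/4,3/4]$. With $$\Delta_n^{\mathrm b}(u):=\frac{L^{\mathrm b}[un^{2/3}]_n-L^{\mathrm b}[0]_n}{2^{3/2}n^{1/3}},\qquad B^{\pm}_n(u):=\frac{L^{\rho_n^\pm}[un^{2/3}]_n-L^{\rho_n^\pm}[0]_n-\mu_{\rho_n^\pm}un^{2/3}}{2^{3/2}n^{1/3}},\quad \mu_\rho=\frac{2\rho-1}{\rho(1-\rho)},$$ and $$E_n(r):=\left\{Z^{\rho_n^-}[Cn^{2/3}]_n\le Z^{\mathrm b}[0]_n\ \text{ and }\ Z^{\mathrm b}[Cn^{2/3}]_n\le Z^{\rho_n^+}[0]_n\right\},$$ on the event $E_n(r)$ one has, for every $\delta\in[0,C]$, $$W_{\Delta^{\mathrm b}_n}(\delta)\le\max\left\{W_{B^-_n}(\delta),W_{B^+_n}(\delta)\right\}+3\sqrt2\,\delta r,$$ where for a process $X$ on $[0,C]$, $W_X(\delta):=\sup\{|X(u)-X(v)|:u,v\in[0,C],\ |u-v|\le\delta\}$.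
   Context: Let $\omega=\{\omega_{i,j}:(i,j)\in\mathbb Z^2,\ i+j>0\}$ be i.i.d. exponential random variables with parameter $1$. Write $(i,j)\le(k,l)$ if $i\le k$ and $j\le l$. An up-right path from $\mathbf x$ to $\mathbf y$ is a sequence $\mathbf x=\mathbf x_0,\dots,\mathbf x_m=\mathbf y$ with increments in $\{(1,0),(0,1)\}$; its passage time is $\sum_{i=1}^m\omega_{\mathbf x_i}$ (starting point excluded). For $\mathbf x=(i,j)\le\mathbf y$ with $i+j\ge0$, $L(\mathbf x,\mathbf y)$ is the maximal passage time over up-right paths. Set $L_k(\mathbf x)=L((k,-k),\mathbf x)$, $C^{\mathbf x}=\{k\in\mathbb Z:(k,-k)\le\mathbf x\}$; for integer $k$, $[k]_n:=(n+k,n-k)$, for real $x$, $[x]_n:=[\lfloor x\rfloor]_n$. A profile is $\mathrm b:\mathbb Z\to\mathbb R\cup\{-\infty\}$ with $\mathrm b(0)=0$ (possibly random, independent of $\omega$); $L^{\mathrm b}(\mathbf x):=\max_{k\in C^{\mathbf x}}\{\mathrm b(k)+L_k(\mathbf x)\}$ and $Z^{\mathrm b}(\mathbf x)$ is the largest maximizing $k$. For $\rho\in(0,1)$ the stationary profile $\mathrm s_\rho$ is $\mathrm s_\rho(0)=0$, $\mathrm s_\rho(k)=\sum_{i=1}^k\zeta_i$ ($k>0$), $\mathrm s_\rho(k)=-\sum_{i=k+1}^0\zeta_i$ ($k<0$), with $\zeta_i$ i.i.d. copies of $E_1-E_2$, $E_1,E_2$ independent exponentials of rates $1-\rho$ and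 $\rho$, independent of $\omega$; $L^\rho:=L^{\mathrm s_\rho}$, $Z^\rho:=Z^{\mathrm s_\rho}$. All processes use the same $\omega$. *)

theory Defs
  imports "HOL-Analysis.Analysis"
begin

type_synonym pt = "int \<times> int"

definition ple :: "pt \<Rightarrow> pt \<Rightarrow> bool" where
  "ple x y \<longleftrightarrow> fst x \<le> fst y \<and> snd x \<le> snd y"

definition up_right_path :: "pt \<Rightarrow> pt \<Rightarrow> pt list \<Rightarrow> bool" where
  "up_right_path x y p \<longleftrightarrow> p \<noteq> [] \<and> hd p = x \<and> last p = y \<and>
     (\<forall>i. Suc i < length p \<longrightarrow>
        p ! Suc i = (fst (p ! i) + 1, snd (p ! i)) \<or> p ! Suc i = (fst (p ! i), snd (p ! i) + 1))"

definition passage :: "(pt \<Rightarrow> real) \<Rightarrow> pt list \<Rightarrow> real" where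
  "passage \<omega> p = sum_list (map \<omega> (tl p))"

definition LPP :: "(pt \<Rightarrow> real) \<Rightarrow> pt \<Rightarrow> pt \<Rightarrow> real" where
  "LPP \<omega> x y = Max {passage \<omega> p | p. up_right_path x y p}"

definition Lk :: "(pt \<Rightarrow> real) \<Rightarrow> int \<Rightarrow> pt \<Rightarrow> real" where
  "Lk \<omega> k x = LPP \<omega> (k, -k) x"

definition Cset :: "pt \<Rightarrow> int set" where
  "Cset x = {k. ple (k, -k) x}"

definition brk :: "int \<Rightarrow> nat \<Rightarrow> pt" where
  "brk k n = (int n + k, int n - k)"

definition brkr :: "real \<Rightarrow> nat \<Rightarrow> pt" where
  "brkr x n = brk \<lfloor>x\<rfloor> n"

definition is_profile :: "(int \<Rightarrow> ereal) \<Rightarrow> bool" where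
  "is_profile b \<longleftrightarrow> b 0 = 0 \<and> (\<forall>k. b k \<noteq> \<infinity>)"

definition Lb :: "(pt \<Rightarrow> real) \<Rightarrow> (int \<Rightarrow> ereal) \<Rightarrow> pt \<Rightarrow> ereal" where
  "Lb \<omega> b x = Max {b k + ereal (Lk \<omega> k x) | k. k \<in> Cset x}"

definition Zb :: "(pt \<Rightarrow> real) \<Rightarrow> (int \<Rightarrow> ereal) \<Rightarrow> pt \<Rightarrow> int" where
  "Zb \<omega> b x = Max {k \<in> Cset x. b k + ereal (Lk \<omega> k x) = Lb \<omega> b x}"

definition mu :: "real \<Rightarrow> real" where
  "mu \<rho> = (2 * \<rho> - 1) / (\<rho> * (1 - \<rho>))"

definition modcont :: "real \<Rightarrow> (real \<Rightarrow> real) \<Rightarrow> real \<Rightarrow> real" where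
  "modcont C X \<delta> = Sup {\<bar>X u - X v\<bar> | u v. u \<in> {0..C} \<and> v \<in> {0..C} \<and> \<bar>u - v\<bar> \<le> \<delta>}"

definition Delta_n :: "(pt \<Rightarrow> real) \<Rightarrow> (int \<Rightarrow> ereal) \<Rightarrow> nat \<Rightarrow> real \<Rightarrow> real" where
  "Delta_n \<omega> b n u =
     (real_of_ereal (Lb \<omega> b (brkr (u * real n powr (2/3)) n)) - real_of_ereal (Lb \<omega> b (brk 0 n)))
     / (2 powr (3/2) * real n powr (1/3))"

text \<open>B_n for a (realization of a) stationary profile s of parameter \<rho>.\<close>
definition B_n :: "(pt \<Rightarrow> real) \<Rightarrow> (int \<Rightarrow> real) \<Rightarrow> real \<Rightarrow> nat \<Rightarrow> real \<Rightarrow> real" where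
  "B_n \<omega> s \<rho> n u =
     (real_of_ereal (Lb \<omega> (\<lambda>k. ereal (s k)) (brkr (u * real n powr (2/3)) n))
      - real_of_ereal (Lb \<omega> (\<lambda>k. ereal (s k)) (brk 0 n))
      - mu \<rho> * u * real n powr (2/3))
     / (2 powr (3/2) * real n powr (1/3))"

end

theory Submission
  imports Defs
begin

text \<open>Geodesics started from the initial antidiagonal cannot cross without meeting, so exchanging
  their tails yields a crossing (quadrangle) inequality for last-passage times. Consequently, if
  the exit point of a profile \<open>g\<close> at \<open>[l]_n\<close> lies weakly left of the exit point of a profile
  \<open>f\<close> at \<open>[k]_n\<close>, \<open>k \<le> l\<close>, then the increment of \<open>L\<^sup>g\<close> over \<open>[k, l]\<close> is at most that of \<open>L\<^sup>f\<close>;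
  moreover exit points are monotone in the endpoint. On \<open>E_n(r)\<close> these two facts sandwich every
  increment of \<open>L\<^sup>b\<close> between the increments of the stationary processes of densities \<open>\<rho>_n\<^sup>-\<close>
  and \<open>\<rho>_n\<^sup>+\<close>. After rescaling, their drifts \<open>\<mu>\<^sub>\<rho> u n\<^sup>2\<^sup>/\<^sup>3\<close> have slope at most \<open>3\<surd>2 r\<close>,
  because \<open>|\<mu>\<^sub>\<rho>| \<le> 32/3 |\<rho> - 1/2|\<close> on \<open>[1/4, 3/4]\<close>.\<close>

section \<open>Up-right paths and the crossing inequality\<close>

lemma up_right_path_step:
  assumes "up_right_path a b p" "Suc i < length p"
  shows "p ! Suc i = (fst (p ! i) + 1, snd (p ! i)) \<or> p ! Suc i = (fst (p ! i), snd (p ! i) + 1)"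
  using assms unfolding up_right_path_def by blast

lemma up_right_path_ends:
  assumes "up_right_path a b p"
  shows "p \<noteq> []" "p ! 0 = a" "p ! (length p - 1) = b"
  using assms by (auto simp: up_right_path_def hd_conv_nth last_conv_nth)

lemma up_right_path_nth_level:
  assumes "up_right_path a b p" "i < length p"
  shows "fst (p ! i) + snd (p ! i) = fst a + snd a + int i"
  using assms(2)
proof (induction i)
  case 0
  then show ?case using up_right_path_ends(2)[OF assms(1)] by simp
next
  case (Suc i)
  then show ?case using up_right_path_step[OF assms(1) Suc.prems] by auto
qed

lemma up_right_path_nth_mono:
  assumes "up_right_path a b p" "i \<le> j" "j < length p"
  shows "ple (p ! i) (p ! j)"
  using assms(2,3)
proof (induction j)
  case 0
  then show ?case by (simp add: ple_def)
next
  case (Suc j)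
  show ?case
  proof (cases "i = Suc j")
    case False
    then have "ple (p ! i) (p ! j)" using Suc by auto
    then show ?thesis using up_right_path_step[OF assms(1) Suc.prems(2)] by (auto simp: ple_def)
  qed (simp add: ple_def)
qed

lemma up_right_path_subset_box:
  assumes "up_right_path a b p"
  shows "set p \<subseteq> {fst a..fst b} \<times> {snd a..snd b}"
proof
  fix x assume "x \<in> set p"
  then obtain i where i: "i < length p" "x = p ! i" by (auto simp: in_set_conv_nth)
  have "ple (p ! 0) (p ! i)" "ple (p ! i) (p ! (length p - 1))"
    using up_right_path_nth_mono[OF assms] i by auto
  then show "x \<in> {fst a..fst b} \<times> {snd a..snd b}"
    using up_right_path_ends[OF assms] i by (auto simp: ple_def mem_Times_iff)
qed

lemma up_right_path_length:
  assumes "up_right_path a b p"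
  shows "int (length p) = fst b + snd b - fst a - snd a + 1"
  using up_right_path_nth_level[OF assms, of "length p - 1"] up_right_path_ends[OF assms]
  by (cases "length p") auto

lemma finite_up_right_paths: "finite {p. up_right_path a b p}"
proof (rule finite_subset)
  show "{p. up_right_path a b p} \<subseteq> {xs. set xs \<subseteq> {fst a..fst b} \<times> {snd a..snd b}
          \<and> length xs = nat (fst b + snd b - fst a - snd a + 1)}"
    using up_right_path_subset_box up_right_path_length by fastforce
  show "finite \<dots>" by (rule finite_lists_length_eq) auto
qed

lemma up_right_path_Cons:
  assumes "up_right_path a' b p" "a' = (fst a + 1, snd a) \<or> a' = (fst a, snd a + 1)"
  shows "up_right_path a b (a # p)"
  unfolding up_right_path_def
proof (intro conjI allI impI)
  show "last (a # p) = b" using assms(1) by (auto simp: up_right_path_def)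
  fix i assume i: "Suc i < length (a # p)"
  show "(a # p) ! Suc i = (fst ((a # p) ! i) + 1, snd ((a # p) ! i)) \<or>
        (a # p) ! Suc i = (fst ((a # p) ! i), snd ((a # p) ! i) + 1)"
  proof (cases i)
    case 0
    then show ?thesis using assms up_right_path_ends(2)[OF assms(1)] by auto
  next
    case (Suc j)
    then show ?thesis using up_right_path_step[OF assms(1), of j] i by auto
  qed
qed simp_all

lemma up_right_path_exists:
  assumes "ple a b"
  shows "\<exists>p. up_right_path a b p"
proof -
  have "\<exists>p. up_right_path a b p" if "ple a b" "nat (fst b - fst a + snd b - snd a) = m" for a m
    using that
  proof (induction m arbitrary: a)
    case 0
    then have "a = b" by (cases a, cases b) (auto simp: ple_def)
    then show ?case by (intro exI[of _ "[a]"]) (auto simp: up_right_path_def)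
  next
    case (Suc m)
    define a' where "a' = (if fst a < fst b then (fst a + 1, snd a) else (fst a, snd a + 1))"
    have "ple a' b" "nat (fst b - fst a' + snd b - snd a') = m"
      using Suc.prems by (auto simp: a'_def ple_def)
    then obtain p where "up_right_path a' b p" using Suc.IH by blast
    then show ?case using up_right_path_Cons a'_def by (metis fst_conv snd_conv)
  qed
  then show ?thesis using assms by blast
qed

lemma up_right_path_splice:
  assumes p: "up_right_path a x p" and q: "up_right_path a' y q"
    and t: "t < length p" "t < length q" and meet: "q ! t = p ! t"
  shows "up_right_path a' x (take (Suc t) q @ drop (Suc t) p)"
proof -
  let ?r = "take (Suc t) q @ drop (Suc t) p"
  have len: "length ?r = length p" using t by auto
  have nth: "?r ! i = (if i \<le> t then q ! i else p ! i)" if "i < length p" for i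
    using that t by (auto simp: nth_append min_absorb2)
  have last_eq: "?r ! (length p - 1) = p ! (length p - 1)"
    by (cases "length p - 1 = t") (use nth[of "length p - 1"] meet t in auto)
  show ?thesis
    unfolding up_right_path_def
  proof (intro conjI allI impI)
    show "?r \<noteq> []" using t by auto
    then show "last ?r = x"
      using last_eq up_right_path_ends(3)[OF p] len by (simp add: last_conv_nth)
    show "hd ?r = a'" using t up_right_path_ends(2)[OF q] by (cases q) auto
    fix i assume i: "Suc i < length ?r"
    show "?r ! Suc i = (fst (?r ! i) + 1, snd (?r ! i)) \<or> ?r ! Suc i = (fst (?r ! i), snd (?r ! i) + 1)"
    proof (cases "Suc i \<le> t")
      case True
      then show ?thesis using nth[of i] nth[of "Suc i"] i len up_right_path_step[OF q, of i] t by auto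
    next
      case False
      then show ?thesis using nth[of i] nth[of "Suc i"] i len up_right_path_step[OF p, of i] meet
        by (cases "i = t") auto
    qed
  qed
qed

lemma passage_le_LPP: "up_right_path a b p \<Longrightarrow> passage \<omega> p \<le> LPP \<omega> a b"
  unfolding LPP_def by (rule Max_ge) (auto simp: setcompr_eq_image intro: finite_up_right_paths)

lemma LPP_attained:
  assumes "ple a b"
  obtains p where "up_right_path a b p" "passage \<omega> p = LPP \<omega> a b"
proof -
  have "LPP \<omega> a b \<in> passage \<omega> ` {p. up_right_path a b p}"
    unfolding LPP_def setcompr_eq_image using up_right_path_exists[OF assms]
    by (intro Max_in) (auto intro: finite_up_right_paths)
  then show ?thesis using that by auto
qed

lemma passage_append: "xs \<noteq> [] \<Longrightarrow> passage \<omega> (xs @ ys) = passage \<omega> xs + sum_list (map \<omega> ys)"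
  by (simp add: passage_def)

lemma int_seq_zero_crossing:
  fixes d :: "nat \<Rightarrow> int"
  assumes "d 0 \<le> 0" "0 \<le> d N" "\<And>i. i < N \<Longrightarrow> d (Suc i) \<le> d i + 1"
  shows "\<exists>t\<le>N. d t = 0"
  using assms(2,3)
proof (induction N)
  case (Suc N)
  show ?case
  proof (cases "0 \<le> d N")
    case True
    then show ?thesis using Suc by (metis le_SucI less_SucI)
  next
    case False
    then show ?thesis using Suc.prems by (intro exI[of _ "Suc N"]) force
  qed
qed (use assms(1) in auto)

lemma LPP_crossing:
  assumes ax: "ple a x" and a'y: "ple a' y"
    and start: "fst a + snd a = fst a' + snd a'" and stop: "fst x + snd x = fst y + snd y"
    and "fst a' \<le> fst a" "fst x \<le> fst y"
  shows "LPP \<omega> a x + LPP \<omega> a' y \<le> LPP \<omega> a y + LPP \<omega> a' x"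
proof -
  obtain p where p: "up_right_path a x p" "passage \<omega> p = LPP \<omega> a x"
    using LPP_attained[OF ax] by blast
  obtain q where q: "up_right_path a' y q" "passage \<omega> q = LPP \<omega> a' y"
    using LPP_attained[OF a'y] by blast
  have len: "length q = length p"
    using up_right_path_length[OF p(1)] up_right_path_length[OF q(1)] start stop by simp
  define N where "N = length p - 1"
  have N: "N < length p" "N < length q" using up_right_path_ends(1)[OF p(1)] len by (auto simp: N_def)
  define d where "d i = fst (q ! i) - fst (p ! i)" for i
  have "\<exists>t\<le>N. d t = 0"
  proof (rule int_seq_zero_crossing)
    show "d 0 \<le> 0" "0 \<le> d N"
      using up_right_path_ends[OF p(1)] up_right_path_ends[OF q(1)] len assms(5,6)
      by (simp_all add: d_def N_def)
    fix i assume "i < N"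
    then have "Suc i < length p" "Suc i < length q" using N by auto
    from up_right_path_step[OF p(1) this(1)] up_right_path_step[OF q(1) this(2)]
    show "d (Suc i) \<le> d i + 1" by (auto simp: d_def)
  qed
  then obtain t where "t \<le> N" and meet_fst: "fst (q ! t) = fst (p ! t)"
    by (auto simp: d_def)
  then have t: "t < length p" "t < length q" using N by auto
  have meet: "q ! t = p ! t"
    using up_right_path_nth_level[OF p(1) t(1)] up_right_path_nth_level[OF q(1) t(2)] meet_fst start
    by (simp add: prod_eq_iff)
  let ?p1 = "take (Suc t) p" and ?p2 = "drop (Suc t) p"
  let ?q1 = "take (Suc t) q" and ?q2 = "drop (Suc t) q"
  have ne: "?p1 \<noteq> []" "?q1 \<noteq> []" using t by auto
  have "passage \<omega> (?q1 @ ?p2) \<le> LPP \<omega> a' x"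
    by (rule passage_le_LPP[OF up_right_path_splice[OF p(1) q(1) t(1,2) meet]])
  moreover have "passage \<omega> (?p1 @ ?q2) \<le> LPP \<omega> a y"
    by (rule passage_le_LPP[OF up_right_path_splice[OF q(1) p(1) t(2,1) meet[symmetric]]])
  moreover have "passage \<omega> p = passage \<omega> ?p1 + sum_list (map \<omega> ?p2)"
    and "passage \<omega> q = passage \<omega> ?q1 + sum_list (map \<omega> ?q2)"
    using passage_append[OF ne(1), of \<omega> ?p2] passage_append[OF ne(2), of \<omega> ?q2] by simp_all
  ultimately show ?thesis
    using p(2) q(2) passage_append[OF ne(1), of \<omega> ?q2] passage_append[OF ne(2), of \<omega> ?p2]
    by linarith
qed

section \<open>Exit points and comparison of increments\<close>

lemma Cset_brk: "Cset (brk k n) = {k - int n .. k + int n}"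
  unfolding Cset_def ple_def brk_def by auto

lemma finite_Cset_brk [simp]: "finite (Cset (brk k n))"
  by (simp add: Cset_brk)

lemma Lk_crossing:
  assumes "z2 \<le> z1" "k \<le> l" "z1 \<in> Cset (brk k n)" "z2 \<in> Cset (brk l n)"
  shows "Lk \<omega> z1 (brk k n) + Lk \<omega> z2 (brk l n) \<le> Lk \<omega> z1 (brk l n) + Lk \<omega> z2 (brk k n)"
  using assms unfolding Lk_def Cset_def by (intro LPP_crossing) (auto simp: brk_def)

lemma Lb_ge: "k \<in> Cset (brk j n) \<Longrightarrow> f k + ereal (Lk \<omega> k (brk j n)) \<le> Lb \<omega> f (brk j n)"
  unfolding Lb_def by (rule Max_ge) (auto simp: setcompr_eq_image)

lemma Lb_attained:
  "\<exists>k\<in>Cset (brk j n). f k + ereal (Lk \<omega> k (brk j n)) = Lb \<omega> f (brk j n)"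
proof -
  have "Lb \<omega> f (brk j n) \<in> (\<lambda>k. f k + ereal (Lk \<omega> k (brk j n))) ` Cset (brk j n)"
    unfolding Lb_def setcompr_eq_image Collect_mem_eq by (intro Max_in) (auto simp: Cset_brk)
  then show ?thesis by force
qed

lemma Zb_in_Cset: "Zb \<omega> f (brk j n) \<in> Cset (brk j n)"
  and Lb_at_Zb: "f (Zb \<omega> f (brk j n)) + ereal (Lk \<omega> (Zb \<omega> f (brk j n)) (brk j n)) = Lb \<omega> f (brk j n)"
proof -
  have "Zb \<omega> f (brk j n) \<in> {k \<in> Cset (brk j n). f k + ereal (Lk \<omega> k (brk j n)) = Lb \<omega> f (brk j n)}"
    unfolding Zb_def using Lb_attained[of j n f \<omega>] by (intro Max_in) auto
  then show "Zb \<omega> f (brk j n) \<in> Cset (brk j n)"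
    "f (Zb \<omega> f (brk j n)) + ereal (Lk \<omega> (Zb \<omega> f (brk j n)) (brk j n)) = Lb \<omega> f (brk j n)"
    by auto
qed

lemma Zb_greatest:
  assumes "k \<in> Cset (brk j n)" "f k + ereal (Lk \<omega> k (brk j n)) = Lb \<omega> f (brk j n)"
  shows "k \<le> Zb \<omega> f (brk j n)"
  unfolding Zb_def using assms by (intro Max_ge) auto

lemma Lb_real_lower:
  assumes "\<forall>i. f i \<noteq> \<infinity>" "k \<in> Cset (brk j n)" "f k = ereal F"
  shows "F + Lk \<omega> k (brk j n) \<le> real_of_ereal (Lb \<omega> f (brk j n))"
proof -
  have "Lb \<omega> f (brk j n) \<noteq> \<infinity>"
    using Lb_attained[of j n f \<omega>] assms(1) by auto
  with Lb_ge[OF assms(2), of f \<omega>] assms(3) show ?thesis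
    by (cases "Lb \<omega> f (brk j n)") auto
qed

lemma Lb_at_Zb_real:
  assumes "\<forall>i. f i \<noteq> \<infinity>" "Lb \<omega> f (brk j n) \<noteq> -\<infinity>"
  obtains F where "f (Zb \<omega> f (brk j n)) = ereal F"
    "real_of_ereal (Lb \<omega> f (brk j n)) = F + Lk \<omega> (Zb \<omega> f (brk j n)) (brk j n)"
proof -
  let ?z = "Zb \<omega> f (brk j n)"
  have sum: "f ?z + ereal (Lk \<omega> ?z (brk j n)) = Lb \<omega> f (brk j n)" by (rule Lb_at_Zb)
  then obtain F where F: "f ?z = ereal F"
    using assms by (cases "f ?z") auto
  with sum have "Lb \<omega> f (brk j n) = ereal (F + Lk \<omega> ?z (brk j n))" by simp
  with F that show ?thesis by simp
qed

lemma Lb_real_profile_neq_minf: "Lb \<omega> (\<lambda>k. ereal (s k)) (brk j n) \<noteq> -\<infinity>"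
  using Lb_attained[of j n "\<lambda>k. ereal (s k)" \<omega>] by auto

text \<open>\<open>real_of_ereal\<close> sends \<open>-\<infinity>\<close> to \<open>0\<close>, so increments are only meaningful where
  \<open>Lb\<close> is finite.\<close>

definition Lb_increment :: "(pt \<Rightarrow> real) \<Rightarrow> (int \<Rightarrow> ereal) \<Rightarrow> nat \<Rightarrow> int \<Rightarrow> int \<Rightarrow> real" where
  "Lb_increment \<omega> f n k l = real_of_ereal (Lb \<omega> f (brk l n)) - real_of_ereal (Lb \<omega> f (brk k n))"

lemma Lb_increment_comparison:
  assumes f: "\<forall>i. f i \<noteq> \<infinity>" and g: "\<forall>i. g i \<noteq> \<infinity>" and "k \<le> l"
    and fk: "Lb \<omega> f (brk k n) \<noteq> -\<infinity>" and gl: "Lb \<omega> g (brk l n) \<noteq> -\<infinity>"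
    and Z: "Zb \<omega> g (brk l n) \<le> Zb \<omega> f (brk k n)"
  shows "Lb_increment \<omega> g n k l \<le> Lb_increment \<omega> f n k l"
proof -
  define z1 where "z1 = Zb \<omega> f (brk k n)"
  define z2 where "z2 = Zb \<omega> g (brk l n)"
  obtain F1 where F1: "f z1 = ereal F1" "real_of_ereal (Lb \<omega> f (brk k n)) = F1 + Lk \<omega> z1 (brk k n)"
    using Lb_at_Zb_real[OF f fk] unfolding z1_def by blast
  obtain G2 where G2: "g z2 = ereal G2" "real_of_ereal (Lb \<omega> g (brk l n)) = G2 + Lk \<omega> z2 (brk l n)"
    using Lb_at_Zb_real[OF g gl] unfolding z2_def by blast
  have z1: "z1 \<in> Cset (brk k n)" and z2: "z2 \<in> Cset (brk l n)"
    unfolding z1_def z2_def by (rule Zb_in_Cset)+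
  have "z1 \<in> Cset (brk l n)" "z2 \<in> Cset (brk k n)"
    using z1 z2 Z \<open>k \<le> l\<close> unfolding z1_def z2_def Cset_brk by auto
  then have "F1 + Lk \<omega> z1 (brk l n) \<le> real_of_ereal (Lb \<omega> f (brk l n))"
    "G2 + Lk \<omega> z2 (brk k n) \<le> real_of_ereal (Lb \<omega> g (brk k n))"
    using Lb_real_lower[OF f _ F1(1), where \<omega>=\<omega>] Lb_real_lower[OF g _ G2(1), where \<omega>=\<omega>] by blast+
  moreover have "Lk \<omega> z1 (brk k n) + Lk \<omega> z2 (brk l n) \<le> Lk \<omega> z1 (brk l n) + Lk \<omega> z2 (brk k n)"
    using Lk_crossing Z \<open>k \<le> l\<close> z1 z2 unfolding z1_def z2_def by blast
  ultimately show ?thesis using F1(2) G2(2) unfolding Lb_increment_def by linarith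
qed

lemma Zb_mono:
  assumes f: "\<forall>i. f i \<noteq> \<infinity>" and "k \<le> l"
    and fk: "Lb \<omega> f (brk k n) \<noteq> -\<infinity>" and fl: "Lb \<omega> f (brk l n) \<noteq> -\<infinity>"
  shows "Zb \<omega> f (brk k n) \<le> Zb \<omega> f (brk l n)"
proof (rule ccontr)
  define z1 where "z1 = Zb \<omega> f (brk k n)"
  define z2 where "z2 = Zb \<omega> f (brk l n)"
  assume "\<not> ?thesis"
  then have "z2 < z1" unfolding z1_def z2_def by simp
  obtain F1 where F1: "f z1 = ereal F1" "real_of_ereal (Lb \<omega> f (brk k n)) = F1 + Lk \<omega> z1 (brk k n)"
    using Lb_at_Zb_real[OF f fk] unfolding z1_def by blast
  obtain F2 where F2: "f z2 = ereal F2" "real_of_ereal (Lb \<omega> f (brk l n)) = F2 + Lk \<omega> z2 (brk l n)"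
    using Lb_at_Zb_real[OF f fl] unfolding z2_def by blast
  have z1: "z1 \<in> Cset (brk k n)" and z2: "z2 \<in> Cset (brk l n)"
    unfolding z1_def z2_def by (rule Zb_in_Cset)+
  have z1l: "z1 \<in> Cset (brk l n)" and z2k: "z2 \<in> Cset (brk k n)"
    using z1 z2 \<open>z2 < z1\<close> \<open>k \<le> l\<close> unfolding Cset_brk by auto
  have "F2 + Lk \<omega> z2 (brk k n) \<le> F1 + Lk \<omega> z1 (brk k n)"
    using Lb_real_lower[OF f z2k F2(1), where \<omega>=\<omega>] F1(2) by simp
  moreover have "Lk \<omega> z1 (brk k n) + Lk \<omega> z2 (brk l n) \<le> Lk \<omega> z1 (brk l n) + Lk \<omega> z2 (brk k n)"
    using Lk_crossing \<open>z2 < z1\<close> \<open>k \<le> l\<close> z1 z2 by (meson less_imp_le)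
  moreover have "F1 + Lk \<omega> z1 (brk l n) \<le> real_of_ereal (Lb \<omega> f (brk l n))"
    by (rule Lb_real_lower[OF f z1l F1(1)])
  ultimately have "f z1 + ereal (Lk \<omega> z1 (brk l n)) = Lb \<omega> f (brk l n)"
    using F1(1) F2(2) fl Lb_attained[of l n f \<omega>] f
    by (cases "Lb \<omega> f (brk l n)") auto
  then have "z1 \<le> z2" unfolding z2_def by (rule Zb_greatest[OF z1l])
  with \<open>z2 < z1\<close> show False by simp
qed

text \<open>If \<open>Lb\<close> were \<open>-\<infinity>\<close> at \<open>brk K n\<close>, every index would maximise and \<open>Zb\<close> would be the
  largest one, \<open>K + n\<close>; the bound on \<open>Zb\<close> then forces \<open>K = 0\<close>, where \<open>b 0 = 0\<close> gives a finite
  term. A finite maximiser at \<open>brk K n\<close> stays admissible for every \<open>brk j n\<close> with \<open>0 \<le> j \<le> K\<close>.\<close>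

lemma profile_Lb_neq_minf:
  assumes b: "is_profile b" and j: "0 \<le> j" "j \<le> K" and Z: "Zb \<omega> b (brk K n) \<le> int n"
  shows "Lb \<omega> b (brk j n) \<noteq> -\<infinity>"
proof -
  have Lb0: "Lb \<omega> b (brk 0 n) \<noteq> -\<infinity>"
    using Lb_ge[of 0 0 n b \<omega>] b by (auto simp: Cset_brk is_profile_def)
  have LbK: "Lb \<omega> b (brk K n) \<noteq> -\<infinity>"
  proof
    assume minf: "Lb \<omega> b (brk K n) = -\<infinity>"
    have "K + int n \<in> Cset (brk K n)" by (simp add: Cset_brk)
    moreover from this have "b (K + int n) + ereal (Lk \<omega> (K + int n) (brk K n)) = Lb \<omega> b (brk K n)"
      using Lb_ge[of "K + int n" K n b \<omega>] minf by simp
    ultimately have "K + int n \<le> Zb \<omega> b (brk K n)" by (rule Zb_greatest)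
    then have "K = 0" using Z j by simp
    with minf Lb0 show False by simp
  qed
  define z where "z = Zb \<omega> b (brk K n)"
  have "b z + ereal (Lk \<omega> z (brk K n)) \<noteq> -\<infinity>"
    using Lb_at_Zb[of b \<omega> K n] LbK unfolding z_def by simp
  then have "b z + ereal (Lk \<omega> z (brk j n)) \<noteq> -\<infinity>" by simp
  moreover have "z \<in> Cset (brk j n)"
    using Zb_in_Cset[of \<omega> b K n] Z j unfolding z_def Cset_brk by auto
  ultimately show ?thesis using Lb_ge[of z j n b \<omega>] by auto
qed

lemma Lb_increment_sandwich:
  fixes sm sp :: "int \<Rightarrow> real"
  defines "fm \<equiv> \<lambda>j. ereal (sm j)" and "fp \<equiv> \<lambda>j. ereal (sp j)"
  assumes b: "is_profile b" and kl: "0 \<le> k" "k \<le> l" "l \<le> K"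
    and Em: "Zb \<omega> fm (brk K n) \<le> Zb \<omega> b (brk 0 n)"
    and Ep: "Zb \<omega> b (brk K n) \<le> Zb \<omega> fp (brk 0 n)"
  shows "Lb_increment \<omega> fm n k l \<le> Lb_increment \<omega> b n k l"
    and "Lb_increment \<omega> b n k l \<le> Lb_increment \<omega> fp n k l"
proof -
  have binf: "\<forall>i. b i \<noteq> \<infinity>" using b by (simp add: is_profile_def)
  have fm: "\<forall>i. fm i \<noteq> \<infinity>" "Lb \<omega> fm (brk j n) \<noteq> -\<infinity>" for j
    unfolding fm_def using Lb_real_profile_neq_minf by auto
  have fp: "\<forall>i. fp i \<noteq> \<infinity>" "Lb \<omega> fp (brk j n) \<noteq> -\<infinity>" for j
    unfolding fp_def using Lb_real_profile_neq_minf by auto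
  have "Zb \<omega> b (brk K n) \<le> int n"
    using Ep Zb_in_Cset[of \<omega> fp 0 n] by (simp add: Cset_brk)
  then have bfin: "Lb \<omega> b (brk j n) \<noteq> -\<infinity>" if "0 \<le> j" "j \<le> K" for j
    using profile_Lb_neq_minf[OF b that] by blast
  have "Zb \<omega> fm (brk l n) \<le> Zb \<omega> fm (brk K n)" using Zb_mono fm kl by blast
  also have "\<dots> \<le> Zb \<omega> b (brk 0 n)" by (rule Em)
  also have "\<dots> \<le> Zb \<omega> b (brk k n)" using Zb_mono[OF binf] bfin kl by simp
  finally show "Lb_increment \<omega> fm n k l \<le> Lb_increment \<omega> b n k l"
    using Lb_increment_comparison[OF binf fm(1)] bfin fm(2) kl by simp
  have "Zb \<omega> b (brk l n) \<le> Zb \<omega> b (brk K n)" using Zb_mono[OF binf] bfin kl by simp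
  also have "\<dots> \<le> Zb \<omega> fp (brk 0 n)" by (rule Ep)
  also have "\<dots> \<le> Zb \<omega> fp (brk k n)" using Zb_mono fp kl by blast
  finally show "Lb_increment \<omega> b n k l \<le> Lb_increment \<omega> fp n k l"
    using Lb_increment_comparison[OF fp(1) binf] bfin fp(2) kl by simp
qed

section \<open>Rescaling and moduli of continuity\<close>

lemma abs_mu_le:
  assumes "\<rho> \<in> {1/4..3/4}"
  shows "\<bar>mu \<rho>\<bar> \<le> 32/3 * \<bar>\<rho> - 1/2\<bar>"
proof -
  have "(\<rho> - 1/4) * (3/4 - \<rho>) \<ge> 0" using assms by (intro mult_nonneg_nonneg) auto
  moreover have "\<rho> * (1 - \<rho>) - 3/16 = (\<rho> - 1/4) * (3/4 - \<rho>)" by (simp add: field_simps)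
  ultimately have pos: "\<rho> * (1 - \<rho>) \<ge> 3/16" by linarith
  have "\<bar>mu \<rho>\<bar> = \<bar>2 * \<rho> - 1\<bar> / (\<rho> * (1 - \<rho>))" using pos by (simp add: mu_def abs_divide)
  also have "\<dots> \<le> \<bar>2 * \<rho> - 1\<bar> / (3/16)" using pos by (intro divide_left_mono) auto
  also have "\<dots> = 32/3 * \<bar>\<rho> - 1/2\<bar>" by (simp add: abs_if)
  finally show ?thesis .
qed

lemma abs_mu_rescaled_le:
  assumes "\<rho> \<in> {1/4..3/4}" "\<bar>\<rho> - 1/2\<bar> \<le> r / real n powr (1/3)" "n \<ge> 1"
  shows "\<bar>mu \<rho>\<bar> * real n powr (2/3) / (2 powr (3/2) * real n powr (1/3)) \<le> 3 * sqrt 2 * r"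
proof -
  define m where "m = real n powr (1/3)"
  have m: "m > 0" using assms(3) by (simp add: m_def)
  have N: "real n powr (2/3) = m * m" using assms(3) by (simp add: m_def flip: powr_add)
  have s: "(2::real) powr (3/2) = 2 * sqrt 2"
    using powr_add[of "2::real" 1 "1/2"] by (simp add: powr_half_sqrt)
  have "\<bar>mu \<rho>\<bar> \<le> 32/3 * (r / m)"
    using order_trans[OF abs_mu_le[OF assms(1)] mult_left_mono[OF assms(2)]] unfolding m_def by simp
  then have "\<bar>mu \<rho>\<bar> * m \<le> 32/3 * r" using m by (simp add: field_simps)
  have "\<bar>mu \<rho>\<bar> * real n powr (2/3) / (2 powr (3/2) * real n powr (1/3)) = \<bar>mu \<rho>\<bar> * m / (2 * sqrt 2)"
    unfolding N s m_def[symmetric] using m by simp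
  also have "\<dots> \<le> (32/3 * r) / (2 * sqrt 2)"
    using \<open>\<bar>mu \<rho>\<bar> * m \<le> 32/3 * r\<close> by (intro divide_right_mono) auto
  also have "\<dots> \<le> 3 * sqrt 2 * r"
    using \<open>\<bar>mu \<rho>\<bar> * m \<le> 32/3 * r\<close> m by (simp add: field_simps) (smt (verit) abs_ge_zero mult_nonneg_nonneg)
  finally show ?thesis .
qed

lemma modcont_upper:
  assumes "bounded (X ` {0..C})" "u \<in> {0..C}" "v \<in> {0..C}" "\<bar>u - v\<bar> \<le> \<delta>"
  shows "\<bar>X u - X v\<bar> \<le> modcont C X \<delta>"
  unfolding modcont_def
proof (rule cSup_upper)
  obtain M where M: "\<forall>w\<in>{0..C}. \<bar>X w\<bar> \<le> M" using assms(1) by (auto simp: bounded_real)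
  show "bdd_above {\<bar>X u - X v\<bar> |u v. u \<in> {0..C} \<and> v \<in> {0..C} \<and> \<bar>u - v\<bar> \<le> \<delta>}"
  proof (rule bdd_aboveI)
    fix x assume "x \<in> {\<bar>X u - X v\<bar> |u v. u \<in> {0..C} \<and> v \<in> {0..C} \<and> \<bar>u - v\<bar> \<le> \<delta>}"
    then obtain u v where "x = \<bar>X u - X v\<bar>" "u \<in> {0..C}" "v \<in> {0..C}" by blast
    moreover from this have "\<bar>X u\<bar> \<le> M" "\<bar>X v\<bar> \<le> M" using M by auto
    ultimately show "x \<le> 2 * M" using abs_triangle_ineq4[of "X u" "X v"] by linarith
  qed
qed (use assms in blast)

lemma modcont_least:
  assumes "\<delta> \<in> {0..C}"
    and "\<And>u v. u \<in> {0..C} \<Longrightarrow> v \<in> {0..C} \<Longrightarrow> \<bar>u - v\<bar> \<le> \<delta> \<Longrightarrow> \<bar>X u - X v\<bar> \<le> T"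
  shows "modcont C X \<delta> \<le> T"
  unfolding modcont_def using assms by (intro cSup_least) force+

lemma modcont_sandwich:
  fixes D Bm Bp :: "real \<Rightarrow> real"
  assumes "bounded (Bm ` {0..C})" "bounded (Bp ` {0..C})"
    and sandwich: "\<And>u v. 0 \<le> u \<Longrightarrow> u \<le> v \<Longrightarrow> v \<le> C \<Longrightarrow>
      Bm v - Bm u + am * (v - u) \<le> D v - D u \<and> D v - D u \<le> Bp v - Bp u + ap * (v - u)"
    and am: "\<bar>am\<bar> \<le> \<kappa>" and ap: "\<bar>ap\<bar> \<le> \<kappa>" and \<delta>: "\<delta> \<in> {0..C}"
  shows "modcont C D \<delta> \<le> max (modcont C Bm \<delta>) (modcont C Bp \<delta>) + \<kappa> * \<delta>"
proof (rule modcont_least[OF \<delta>])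
  have ordered: "\<bar>D v - D u\<bar> \<le> max \<bar>Bm v - Bm u\<bar> \<bar>Bp v - Bp u\<bar> + \<kappa> * (v - u)"
    if "0 \<le> u" "u \<le> v" "v \<le> C" for u v
  proof -
    have "\<bar>am * (v - u)\<bar> \<le> \<kappa> * (v - u)" "\<bar>ap * (v - u)\<bar> \<le> \<kappa> * (v - u)"
      using am ap that by (auto simp: abs_mult intro: mult_right_mono)
    then show ?thesis using sandwich[OF that] by (auto simp: abs_le_iff max_def)
  qed
  fix u v assume u: "u \<in> {0..C}" and v: "v \<in> {0..C}" and uv: "\<bar>u - v\<bar> \<le> \<delta>"
  have "\<bar>D u - D v\<bar> \<le> max \<bar>Bm u - Bm v\<bar> \<bar>Bp u - Bp v\<bar> + \<kappa> * \<bar>u - v\<bar>"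
    using ordered[of u v] ordered[of v u] u v
    by (cases "u \<le> v") (auto simp: abs_minus_commute)
  also have "\<dots> \<le> max (modcont C Bm \<delta>) (modcont C Bp \<delta>) + \<kappa> * \<delta>"
    using modcont_upper[OF assms(1) u v uv] modcont_upper[OF assms(2) u v uv] uv am
    by (intro add_mono max.mono mult_left_mono) auto
  finally show "\<bar>D u - D v\<bar> \<le> max (modcont C Bm \<delta>) (modcont C Bp \<delta>) + \<kappa> * \<delta>" .
qed

lemma bounded_floor_comp:
  fixes g :: "int \<Rightarrow> real"
  assumes "0 \<le> N"
  shows "bounded ((\<lambda>u. g \<lfloor>u * N\<rfloor>) ` {0..C})"
proof (rule bounded_subset)
  show "bounded (g ` {0..\<lfloor>C * N\<rfloor>})" by (rule finite_imp_bounded) simp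
  show "(\<lambda>u. g \<lfloor>u * N\<rfloor>) ` {0..C} \<subseteq> g ` {0..\<lfloor>C * N\<rfloor>}"
    using assms by (auto intro!: imageI floor_mono mult_right_mono)
qed

lemma B_n_bounded: "bounded (B_n \<omega> s \<rho> n ` {0..C})"
proof -
  let ?N = "real n powr (2/3)" and ?c = "2 powr (3/2) * real n powr (1/3)"
    and ?g = "\<lambda>k. real_of_ereal (Lb \<omega> (\<lambda>k. ereal (s k)) (brk k n))"
  have "bounded ((\<lambda>u. ?g \<lfloor>u * ?N\<rfloor> - ?g 0) ` {0..C})"
    by (intro bounded_minus_comp bounded_floor_comp) auto
  moreover have "bounded ((\<lambda>u. mu \<rho> * u * ?N) ` {0..C})"
    by (intro compact_imp_bounded compact_continuous_image continuous_intros) auto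
  ultimately have "bounded ((\<lambda>u. ?g \<lfloor>u * ?N\<rfloor> - ?g 0 - mu \<rho> * u * ?N) ` {0..C})"
    by (rule bounded_minus_comp)
  then have "bounded ((\<lambda>u. inverse ?c *\<^sub>R (?g \<lfloor>u * ?N\<rfloor> - ?g 0 - mu \<rho> * u * ?N)) ` {0..C})"
    by (rule bounded_scaleR_comp)
  moreover have "B_n \<omega> s \<rho> n = (\<lambda>u. inverse ?c *\<^sub>R (?g \<lfloor>u * ?N\<rfloor> - ?g 0 - mu \<rho> * u * ?N))"
    unfolding B_n_def brkr_def by (simp only: real_scaleR_def divide_inverse_commute)
  ultimately show ?thesis by (simp only:)
qed

lemma Delta_n_diff:
  "Delta_n \<omega> b n v - Delta_n \<omega> b n u
     = Lb_increment \<omega> b n \<lfloor>u * real n powr (2/3)\<rfloor> \<lfloor>v * real n powr (2/3)\<rfloor>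
       / (2 powr (3/2) * real n powr (1/3))"
  by (simp add: Delta_n_def brkr_def Lb_increment_def diff_divide_distrib)

lemma B_n_diff:
  "B_n \<omega> s \<rho> n v - B_n \<omega> s \<rho> n u
     = (Lb_increment \<omega> (\<lambda>k. ereal (s k)) n \<lfloor>u * real n powr (2/3)\<rfloor> \<lfloor>v * real n powr (2/3)\<rfloor>
        - mu \<rho> * (v - u) * real n powr (2/3)) / (2 powr (3/2) * real n powr (1/3))"
  unfolding B_n_def brkr_def Lb_increment_def diff_divide_distrib[symmetric] by (simp add: algebra_simps)

theorem corollary1:
  fixes \<omega> :: "int \<times> int \<Rightarrow> real"
    and b :: "int \<Rightarrow> ereal"
    and sm sp :: "int \<Rightarrow> real"
    and C r \<delta> :: real
    and n :: nat
  assumes \<omega>_pos: "\<And>i j. i + j > 0 \<Longrightarrow> \<omega> (i, j) > 0"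
    and b: "is_profile b"
    and sm0: "sm 0 = 0" and sp0: "sp 0 = 0"
    and C: "C \<ge> 0" and r: "r > 0" and n: "n \<ge> 1"
    and rm: "1/2 - r / real n powr (1/3) \<in> {1/4..3/4}"
    and rp: "1/2 + r / real n powr (1/3) \<in> {1/4..3/4}"
    and E: "Zb \<omega> (\<lambda>k. ereal (sm k)) (brkr (C * real n powr (2/3)) n) \<le> Zb \<omega> b (brk 0 n)
            \<and> Zb \<omega> b (brkr (C * real n powr (2/3)) n) \<le> Zb \<omega> (\<lambda>k. ereal (sp k)) (brk 0 n)"
    and \<delta>: "\<delta> \<in> {0..C}"
  shows "modcont C (Delta_n \<omega> b n) \<delta>
         \<le> max (modcont C (B_n \<omega> sm (1/2 - r / real n powr (1/3)) n) \<delta>)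
               (modcont C (B_n \<omega> sp (1/2 + r / real n powr (1/3)) n) \<delta>)
           + 3 * sqrt 2 * \<delta> * r"
proof -
  define N where "N = real n powr (2/3)"
  define c where "c = 2 powr (3/2) * real n powr (1/3)"
  let ?\<rho>m = "1/2 - r / real n powr (1/3)" and ?\<rho>p = "1/2 + r / real n powr (1/3)"
  have "0 \<le> N" "0 < c" using n by (simp_all add: N_def c_def)
  have "modcont C (Delta_n \<omega> b n) \<delta>
    \<le> max (modcont C (B_n \<omega> sm ?\<rho>m n) \<delta>) (modcont C (B_n \<omega> sp ?\<rho>p n) \<delta>) + (3 * sqrt 2 * r) * \<delta>"
  proof (rule modcont_sandwich[OF B_n_bounded B_n_bounded _ _ _ \<delta>])
    show "\<bar>mu ?\<rho>m * N / c\<bar> \<le> 3 * sqrt 2 * r" "\<bar>mu ?\<rho>p * N / c\<bar> \<le> 3 * sqrt 2 * r"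
      using abs_mu_rescaled_le[OF rm _ n] abs_mu_rescaled_le[OF rp _ n] r \<open>0 \<le> N\<close> \<open>0 < c\<close>
      by (simp_all add: N_def c_def abs_mult abs_divide)
    fix u v assume uv: "0 \<le> u" "u \<le> v" "v \<le> C"
    have kl: "0 \<le> \<lfloor>u * N\<rfloor>" "\<lfloor>u * N\<rfloor> \<le> \<lfloor>v * N\<rfloor>" "\<lfloor>v * N\<rfloor> \<le> \<lfloor>C * N\<rfloor>"
      using uv \<open>0 \<le> N\<close> by (auto intro!: floor_mono mult_right_mono)
    have E': "Zb \<omega> (\<lambda>k. ereal (sm k)) (brk \<lfloor>C * N\<rfloor> n) \<le> Zb \<omega> b (brk 0 n)"
      "Zb \<omega> b (brk \<lfloor>C * N\<rfloor> n) \<le> Zb \<omega> (\<lambda>k. ereal (sp k)) (brk 0 n)"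
      using E by (simp_all add: brkr_def N_def)
    have "Lb_increment \<omega> (\<lambda>k. ereal (sm k)) n \<lfloor>u * N\<rfloor> \<lfloor>v * N\<rfloor> \<le> Lb_increment \<omega> b n \<lfloor>u * N\<rfloor> \<lfloor>v * N\<rfloor>"
      "Lb_increment \<omega> b n \<lfloor>u * N\<rfloor> \<lfloor>v * N\<rfloor> \<le> Lb_increment \<omega> (\<lambda>k. ereal (sp k)) n \<lfloor>u * N\<rfloor> \<lfloor>v * N\<rfloor>"
      using Lb_increment_sandwich[OF b kl E'] by simp_all
    then show "B_n \<omega> sm ?\<rho>m n v - B_n \<omega> sm ?\<rho>m n u + mu ?\<rho>m * N / c * (v - u)
        \<le> Delta_n \<omega> b n v - Delta_n \<omega> b n u
      \<and> Delta_n \<omega> b n v - Delta_n \<omega> b n u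
        \<le> B_n \<omega> sp ?\<rho>p n v - B_n \<omega> sp ?\<rho>p n u + mu ?\<rho>p * N / c * (v - u)"
      using \<open>0 < c\<close> unfolding Delta_n_diff B_n_diff N_def[symmetric] c_def[symmetric]
      by (simp add: divide_right_mono diff_divide_distrib)
  qed
  then show ?thesis by (simp add: mult_ac)
qed

end
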